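(* Let $M(C,\bar\xi,\pi)$ be a Myller configuration with Darboux frame $(\bar\xi,\bar\mu,\bar v)$ and invariants $G,K,T$, $(T,K)\neq(0,0)$ everywhere, and suppose $C$ is a $\bar v$-helix with fixed unit axis $\bar d_v$ and constant angle $\omega$, $\langle\bar v,\bar d_v\rangle=\cos\omega$. Then, for one choice of sign, $$\bar d_v=\mp\sin\omega\frac{T}{\sqrt{T^2+K^2}}\bar\xi\pm\sin\omega\frac{K}{\sqrt{T^2+K^2}}\bar\mu+(\cos\omega)\bar v.$$
   Context: Let $C$ be a smooth curve in $E^3$ parametrized by arclength $s$; primes denote $d/ds$. A Myller configuration $M(C,\bar\xi,\pi)$ consists of a smooth unit vector field $\bar\xi$ along $C$ and a smooth oriented plane field $\pi$ with $\bar\xi\in\pi$; $\bar v$ is the unit normal of $\pi$, $\bar\mu=\bar v\times\bar\xi$, and $\bar\xi'=G\bar\mu+K\bar v$, $\bar\mu'=-G\bar\xi+T\bar v$, $\bar v'=-K\bar\xi-T\bar\mu$. $C$ is a $\bar v$-helix if there are a constant unit vector $\bar d_v$ (axis) and a constant $\omega$ with $\langle\bar v,\bar d_v\rangle=\cos\omega$ along $C$. *)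

theory Defs
  imports "HOL-Analysis.Analysis" "HOL-Analysis.Cross3"
begin

definition myller_frame ::
  "real set \<Rightarrow> (real \<Rightarrow> real^3) \<Rightarrow> (real \<Rightarrow> real^3) \<Rightarrow> (real \<Rightarrow> real^3)
   \<Rightarrow> (real \<Rightarrow> real) \<Rightarrow> (real \<Rightarrow> real) \<Rightarrow> (real \<Rightarrow> real) \<Rightarrow> bool" where
  "myller_frame I xi mu v G K T \<longleftrightarrow>
     (\<forall>s\<in>I. norm (xi s) = 1 \<and> norm (v s) = 1 \<and> xi s \<bullet> v s = 0 \<and> mu s = cross3 (v s) (xi s)) \<and>
     continuous_on I G \<and> continuous_on I K \<and> continuous_on I T \<and>
     (\<forall>s\<in>I. (xi has_vector_derivative (G s *\<^sub>R mu s + K s *\<^sub>R v s)) (at s)) \<and>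
     (\<forall>s\<in>I. (mu has_vector_derivative (- G s *\<^sub>R xi s + T s *\<^sub>R v s)) (at s)) \<and>
     (\<forall>s\<in>I. (v has_vector_derivative (- K s *\<^sub>R xi s - T s *\<^sub>R mu s)) (at s))"

definition v_helix :: "real set \<Rightarrow> (real \<Rightarrow> real^3) \<Rightarrow> real^3 \<Rightarrow> real \<Rightarrow> bool" where
  "v_helix I v d \<omega> \<longleftrightarrow> norm d = 1 \<and> (\<forall>s\<in>I. v s \<bullet> d = cos \<omega>)"

end

(* Expand the axis in the Darboux frame: d = alpha xi + beta mu + cos omega v with
   alpha^2 + beta^2 = sin^2 omega, since d is a unit vector. Differentiating <v, d> = cos omega
   gives K alpha + T beta = 0, so (alpha, beta) is a multiple eta of the unit vector
   (-T, K) / sqrt (T^2 + K^2), and eta^2 = sin^2 omega. The factor eta is continuous and takes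
   only the values +- sin omega, so on the interval it is one of them throughout. *)
theory Submission
  imports Defs
begin

lemma cross3_reciprocal_basis:
  fixes a b d :: "real^3"
  shows "(norm (cross3 a b))\<^sup>2 *\<^sub>R d =
    (d \<bullet> a) *\<^sub>R cross3 b (cross3 a b) + (d \<bullet> b) *\<^sub>R cross3 (cross3 a b) a
      + (d \<bullet> cross3 a b) *\<^sub>R cross3 a b"
  unfolding power2_norm_eq_inner by (simp add: cross3_simps power2_eq_square forall_3)

lemma cross3_cross3_left: "cross3 (cross3 a b) c = (a \<bullet> c) *\<^sub>R b - (b \<bullet> c) *\<^sub>R a"
  and cross3_cross3_right: "cross3 a (cross3 b c) = (a \<bullet> c) *\<^sub>R b - (a \<bullet> b) *\<^sub>R c"
  for a b c :: "real^3"
  by (simp_all add: cross3_simps forall_3)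

lemma orthonormal_cross3_decomposition:
  fixes x v d :: "real^3"
  assumes "norm x = 1" "norm v = 1" "x \<bullet> v = 0"
  shows "d = (d \<bullet> x) *\<^sub>R x + (d \<bullet> cross3 v x) *\<^sub>R cross3 v x + (d \<bullet> v) *\<^sub>R v"
proof -
  have unit: "x \<bullet> x = 1" "v \<bullet> v = 1"
    using assms by (simp_all add: dot_square_norm)
  have "(norm (cross3 v x))\<^sup>2 = 1"
    using norm_cross_dot[of v x] assms by (simp add: inner_commute)
  then show ?thesis
    using cross3_reciprocal_basis[of v x d] unit assms(3)
    by (simp add: cross3_cross3_left cross3_cross3_right inner_commute algebra_simps)
qed

lemma inner_sum3_self:
  fixes d x m v :: "real^3"
  assumes "d = (d \<bullet> x) *\<^sub>R x + (d \<bullet> m) *\<^sub>R m + (d \<bullet> v) *\<^sub>R v"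
  shows "(norm d)\<^sup>2 = (d \<bullet> x)\<^sup>2 + (d \<bullet> m)\<^sup>2 + (d \<bullet> v)\<^sup>2"
proof -
  have "(norm d)\<^sup>2 = d \<bullet> ((d \<bullet> x) *\<^sub>R x + (d \<bullet> m) *\<^sub>R m + (d \<bullet> v) *\<^sub>R v)"
    using assms by (metis power2_norm_eq_inner)
  then show ?thesis by (simp add: inner_add_right power2_eq_square)
qed

lemma myller_frame_decomposition:
  assumes "myller_frame I xi mu v G K T" "s \<in> I"
  shows "w = (w \<bullet> xi s) *\<^sub>R xi s + (w \<bullet> mu s) *\<^sub>R mu s + (w \<bullet> v s) *\<^sub>R v s"
  using assms orthonormal_cross3_decomposition[of "xi s" "v s" w]
  by (simp add: myller_frame_def)

lemma myller_frame_continuous: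
  assumes "myller_frame I xi mu v G K T"
  shows "continuous_on I xi" "continuous_on I mu"
  using assms unfolding myller_frame_def
  by (meson has_vector_derivative_continuous continuous_at_imp_continuous_on)+

lemma has_vector_derivative_inner_locally_constant:
  fixes f :: "real \<Rightarrow> 'a::real_inner"
  assumes "open S" "s \<in> S" "(f has_vector_derivative f') (at s)" "\<forall>t\<in>S. f t \<bullet> d = c"
  shows "f' \<bullet> d = 0"
proof -
  have "((\<lambda>t. f t \<bullet> d) has_derivative (\<lambda>h. (h *\<^sub>R f') \<bullet> d)) (at s)"
    using assms(3) by (auto intro!: derivative_eq_intros simp: has_vector_derivative_def)
  moreover have "((\<lambda>t. f t \<bullet> d) has_derivative (\<lambda>h. 0)) (at s)"
    by (rule has_derivative_transform_within_open[of "\<lambda>t. c" _ _ _ S]) (use assms in auto)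
  ultimately have "(\<lambda>h. (h *\<^sub>R f') \<bullet> d) = (\<lambda>h. 0)"
    by (rule has_derivative_unique)
  then show ?thesis by (metis scaleR_one)
qed

lemma v_helix_axis_relation:
  assumes "open I" "myller_frame I xi mu v G K T" "v_helix I v d \<omega>" "s \<in> I"
  shows "K s * (d \<bullet> xi s) + T s * (d \<bullet> mu s) = 0"
proof -
  have "(- K s *\<^sub>R xi s - T s *\<^sub>R mu s) \<bullet> d = 0"
    using assms by (intro has_vector_derivative_inner_locally_constant[of I s v _ d "cos \<omega>"])
      (auto simp: myller_frame_def v_helix_def)
  then show ?thesis by (simp add: inner_diff_right inner_diff_left inner_commute[of _ d])
qed

lemma orthogonal_plane_vector:
  fixes \<alpha> \<beta> T K :: real
  assumes "K * \<alpha> + T * \<beta> = 0" "(T, K) \<noteq> (0, 0)"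
  defines "r \<equiv> sqrt (T\<^sup>2 + K\<^sup>2)"
  defines "\<eta> \<equiv> (\<beta> * K - \<alpha> * T) / r"
  shows "\<alpha> = - \<eta> * T / r" "\<beta> = \<eta> * K / r" "\<eta>\<^sup>2 = \<alpha>\<^sup>2 + \<beta>\<^sup>2"
proof -
  have r2: "r\<^sup>2 = T\<^sup>2 + K\<^sup>2"
    by (simp add: r_def)
  have "r \<noteq> 0"
    using assms(2) by (simp add: r_def sum_power2_eq_zero_iff)
  have "\<alpha> * r\<^sup>2 = T * (\<alpha> * T - \<beta> * K) + K * (K * \<alpha> + T * \<beta>)"
       "\<beta> * r\<^sup>2 = K * (\<beta> * K - \<alpha> * T) + T * (K * \<alpha> + T * \<beta>)"
    unfolding r2 by (simp_all add: power2_eq_square algebra_simps)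
  then show "\<alpha> = - \<eta> * T / r" "\<beta> = \<eta> * K / r"
    using assms(1) \<open>r \<noteq> 0\<close> by (simp_all add: \<eta>_def field_simps power2_eq_square)
  have "(\<beta> * K - \<alpha> * T)\<^sup>2 + (K * \<alpha> + T * \<beta>)\<^sup>2 = (\<alpha>\<^sup>2 + \<beta>\<^sup>2) * r\<^sup>2"
    unfolding r2 by (simp add: power2_eq_square algebra_simps)
  then show "\<eta>\<^sup>2 = \<alpha>\<^sup>2 + \<beta>\<^sup>2"
    using assms(1) \<open>r \<noteq> 0\<close> by (simp add: \<eta>_def power_divide)
qed

lemma continuous_on_square_const_imp_sign_const:
  fixes f :: "'a::topological_space \<Rightarrow> real"
  assumes "connected S" "continuous_on S f" "\<forall>s\<in>S. (f s)\<^sup>2 = c\<^sup>2"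
  shows "\<exists>\<sigma>. (\<sigma> = 1 \<or> \<sigma> = -1) \<and> (\<forall>s\<in>S. f s = \<sigma> * c)"
proof (cases "S = {}")
  case False
  then obtain s0 where "s0 \<in> S" by blast
  have "f ` S \<subseteq> {c, - c}"
    using assms(3) by (auto simp: power2_eq_iff)
  then have "f constant_on S"
    using assms(1,2) by (intro continuous_finite_range_constant) (auto intro: finite_subset)
  then have "\<forall>s\<in>S. f s = f s0"
    using \<open>s0 \<in> S\<close> by (auto simp: constant_on_def)
  moreover have "f s0 = 1 * c \<or> f s0 = -1 * c"
    using \<open>f ` S \<subseteq> {c, - c}\<close> \<open>s0 \<in> S\<close> by auto
  ultimately show ?thesis by metis
qed auto

lemma v_helix_axis_components:
  assumes "open I" "myller_frame I xi mu v G K T" "v_helix I v d \<omega>" "s \<in> I"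
    and "(T s, K s) \<noteq> (0, 0)"
  defines "r \<equiv> sqrt ((T s)\<^sup>2 + (K s)\<^sup>2)"
  defines "\<eta> \<equiv> ((d \<bullet> mu s) * K s - (d \<bullet> xi s) * T s) / r"
  shows "d = (- \<eta> * T s / r) *\<^sub>R xi s + (\<eta> * K s / r) *\<^sub>R mu s + cos \<omega> *\<^sub>R v s"
    and "\<eta>\<^sup>2 = (sin \<omega>)\<^sup>2"
proof -
  note components = orthogonal_plane_vector[OF v_helix_axis_relation[OF assms(1-4)] assms(5),
      folded r_def, folded \<eta>_def]
  have axis: "norm d = 1" "d \<bullet> v s = cos \<omega>"
    using assms(3,4) by (simp_all add: v_helix_def inner_commute)
  note decomposition = myller_frame_decomposition[OF assms(2,4), of d]
  then show "d = (- \<eta> * T s / r) *\<^sub>R xi s + (\<eta> * K s / r) *\<^sub>R mu s + cos \<omega> *\<^sub>R v s"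
    using axis components(1,2) by metis
  show "\<eta>\<^sup>2 = (sin \<omega>)\<^sup>2"
    using inner_sum3_self[OF decomposition] axis components(3) by (simp add: cos_squared_eq)
qed

theorem corollary25:
  fixes a b :: real and xi mu v :: "real \<Rightarrow> real^3" and G K T :: "real \<Rightarrow> real"
    and d :: "real^3" and \<omega> :: real
  assumes "a < b"
    and "myller_frame {a<..<b} xi mu v G K T"
    and "\<forall>s\<in>{a<..<b}. (T s, K s) \<noteq> (0, 0)"
    and "v_helix {a<..<b} v d \<omega>"
  shows "\<exists>\<sigma>::real. (\<sigma> = 1 \<or> \<sigma> = -1) \<and>
    (\<forall>s\<in>{a<..<b}.
       d = (- \<sigma> * sin \<omega> * T s / sqrt ((T s)\<^sup>2 + (K s)\<^sup>2)) *\<^sub>R xi s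
         + (\<sigma> * sin \<omega> * K s / sqrt ((T s)\<^sup>2 + (K s)\<^sup>2)) *\<^sub>R mu s
         + cos \<omega> *\<^sub>R v s)"
proof -
  let ?I = "{a<..<b}"
  define \<eta> where "\<eta> s = ((d \<bullet> mu s) * K s - (d \<bullet> xi s) * T s) / sqrt ((T s)\<^sup>2 + (K s)\<^sup>2)"
    for s
  note components = v_helix_axis_components[OF open_greaterThanLessThan assms(2,4), folded \<eta>_def]
  have "continuous_on ?I \<eta>"
    unfolding \<eta>_def using assms(2,3) myller_frame_continuous[OF assms(2)]
    by (intro continuous_intros) (auto simp: myller_frame_def sum_power2_eq_zero_iff)
  then obtain \<sigma> where \<sigma>: "\<sigma> = 1 \<or> \<sigma> = -1" "\<forall>s\<in>?I. \<eta> s = \<sigma> * sin \<omega>"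
    using continuous_on_square_const_imp_sign_const[of ?I \<eta> "sin \<omega>"] components(2) assms(3)
    by auto
  show ?thesis
    using \<sigma> components(1) assms(3) by (intro exI[of _ \<sigma>]) auto
qed

end
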